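(* For every $n\geq 2$ and every $r\in[n]$, $$\sum_{T\in \mathcal P_{n}^{(r)}}t^{\mathrm{eld}(T)}\prod_{i=1}^{n}x_i^{\mathrm{young}_T(i)}=x_r\prod_{k=1}^{n-2}(x_1+\cdots+x_{n}+kt).$$
   Context: All trees are rooted trees whose vertices are labeled by distinct positive integers. A vertex $j$ is a descendant of $i$ if the path from the root to $j$ passes through $i$ (every vertex is a descendant of itself); $\beta_T(i)$ is the smallest descendant of $i$. A child of $i$ is a descendant joined to $i$ by an edge; children of the same vertex are brothers. A plane tree is a rooted tree in which the children of each vertex are linearly ordered (left to right). In a plane tree $T$, a vertex $j$ is elder if it has a brother $k$ to its right with $\beta_T(k)<\beta_T(j)$. $\mathrm{eld}_T(v)$ is the number of elder children of $v$, $\mathrm{eld}(T)$ the total number of elder vertices, $\deg_T(v)$ the number of children of $v$, and $\mathrm{young}_T(v)=\deg_T(v)-\mathrm{eld}_T(v)$. $\mathcal P_n^{(r)}$ is the set of plane trees on $[n]=\{1,\dots,n\}$ with root $r$. The empty product equals $1$. *)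

theory Defs
  imports Main
begin

text \<open>A plane tree: a labelled root together with the ordered (left to right) list of
  subtrees rooted at its children.\<close>
datatype ptree = PNode nat "ptree list"

fun root :: "ptree \<Rightarrow> nat" where
  "root (PNode v ts) = v"

fun children :: "ptree \<Rightarrow> ptree list" where
  "children (PNode v ts) = ts"

fun labels :: "ptree \<Rightarrow> nat list" where
  "labels (PNode v ts) = v # concat (map labels ts)"

text \<open>beta of the root of a subtree: smallest descendant.\<close>
definition beta :: "ptree \<Rightarrow> nat" where
  "beta T = Min (set (labels T))"

definition eld_children :: "ptree list \<Rightarrow> nat" where
  "eld_children ts = card {i. i < length ts \<and>
      (\<exists>k. i < k \<and> k < length ts \<and> beta (ts ! k) < beta (ts ! i))}"

fun eld :: "ptree \<Rightarrow> nat" where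
  "eld (PNode v ts) = eld_children ts + sum_list (map eld ts)"

text \<open>young_T(v) = deg_T(v) - eld_T(v); 0 if v is not a vertex.\<close>
fun young :: "ptree \<Rightarrow> nat \<Rightarrow> nat" where
  "young (PNode w ts) v =
     (if v = w then length ts - eld_children ts else sum_list (map (\<lambda>s. young s v) ts))"

definition plane_trees :: "nat \<Rightarrow> nat \<Rightarrow> ptree set" where
  "plane_trees n r = {T. distinct (labels T) \<and> set (labels T) = {1..n} \<and> root T = r}"

end

theory Submission
  imports Defs "HOL-Combinatorics.Multiset_Permutations" "HOL-Library.Disjoint_Sets"
begin

text \<open>
  The identity is proved for plane forests. Write x_A for the sum of the x_i over i \<in> A. The
  plane forests on a vertex set S whose roots form the set R \<subseteq> S have total weight
  x_R (x_S + t) (x_S + 2t) \<dots> (x_S + (|S - R| - 1) t). Deleting a root a turns the subtrees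
  of its children into new trees, whose roots form a set A \<subseteq> S - R, and the forest is recovered
  from the smaller forest together with an ordering of these subtrees. A child is young exactly
  when its subtree minimum is smaller than those of all its right brothers, so the orderings
  contribute x_a (x_a + t) \<dots> (x_a + (|A| - 1) t), and the induction step on |S| is a
  Vandermonde-type convolution of such rising products.
\<close>

hide_const (open) NthRoot.root

section \<open>Plane trees\<close>

abbreviation vertices :: "ptree \<Rightarrow> nat set" where
  "vertices T \<equiv> set (labels T)"

lemma labels_ne_Nil: "labels T \<noteq> []"
  by (cases T) simp

lemma root_in_vertices: "root T \<in> vertices T"
  by (cases T) simp

lemma beta_in_vertices: "beta T \<in> vertices T"
  unfolding beta_def using labels_ne_Nil[of T] by (intro Min_in) auto

lemma young_eq_0_if_not_vertex: "v \<notin> vertices T \<Longrightarrow> young T v = 0"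
  by (induction T) (auto intro!: sum_list_eq_0_iff[THEN iffD2])

lemma distinct_concat_map_iff:
  assumes "\<forall>x\<in>set xs. f x \<noteq> []"
  shows "distinct (concat (map f xs)) \<longleftrightarrow>
    distinct xs \<and> (\<forall>x\<in>set xs. distinct (f x)) \<and> disjoint_family_on (\<lambda>x. set (f x)) (set xs)"
  using assms
proof (induction xs)
  case (Cons y xs)
  have "y \<notin> set xs" if "set (f y) \<inter> (\<Union>x\<in>set xs. set (f x)) = {}"
    using that Cons.prems by (metis UN_I disjoint_iff list.set_intros(1) list.set_sel(1))
  then show ?case
    using Cons by (fastforce simp: disjoint_family_on_insert)
qed (simp add: disjoint_family_on_def)

lemma distinct_labels_PNode:
  "distinct (labels (PNode v ts)) \<longleftrightarrow> v \<notin> (\<Union>s\<in>set ts. vertices s) \<and> distinct ts \<and>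
     (\<forall>s\<in>set ts. distinct (labels s)) \<and> disjoint_family_on vertices (set ts)"
  using distinct_concat_map_iff[of ts labels] labels_ne_Nil by auto

fun tree_weight :: "'a::comm_ring_1 \<Rightarrow> (nat \<Rightarrow> 'a) \<Rightarrow> ptree \<Rightarrow> 'a" where
  "tree_weight t x (PNode v ts) =
     t ^ eld_children ts * x v ^ (length ts - eld_children ts) * (\<Prod>s\<leftarrow>ts. tree_weight t x s)"

lemma monomial_eq_tree_weight:
  fixes t :: "'a::comm_ring_1"
  assumes "finite I" "distinct (labels T)" "vertices T \<subseteq> I"
  shows "t ^ eld T * (\<Prod>i\<in>I. x i ^ young T i) = tree_weight t x T"
  using assms(2,3)
proof (induction T)
  case (PNode v ts)
  let ?d = "length ts - eld_children ts"
  have v: "v \<in> I" "\<forall>s\<in>set ts. v \<notin> vertices s" "distinct ts"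
    using PNode.prems unfolding distinct_labels_PNode by auto
  have IH: "t ^ eld s * (\<Prod>i\<in>I. x i ^ young s i) = tree_weight t x s" if "s \<in> set ts" for s
    using PNode.IH PNode.prems that unfolding distinct_labels_PNode by auto
  have young: "young (PNode v ts) i = (if i = v then ?d else 0) + (\<Sum>s\<in>set ts. young s i)" for i
    using v by (auto simp: sum_list_distinct_conv_sum_set young_eq_0_if_not_vertex)
  have "(\<Prod>i\<in>I. x i ^ (if i = v then ?d else 0)) = x v ^ ?d"
    using assms(1) v(1) by (simp add: if_distrib[of "power _"] prod.delta cong: if_cong)
  then have "(\<Prod>i\<in>I. x i ^ young (PNode v ts) i) =
      x v ^ ?d * (\<Prod>s\<in>set ts. \<Prod>i\<in>I. x i ^ young s i)"
    unfolding young power_add power_sum prod.distrib by (simp add: prod.swap[of _ I])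
  moreover have "t ^ eld (PNode v ts) = t ^ eld_children ts * (\<Prod>s\<in>set ts. t ^ eld s)"
    using v(3) by (simp add: sum_list_distinct_conv_sum_set power_add power_sum)
  ultimately show ?case
    using v(3) IH by (simp add: prod.distinct_set_conv_list[symmetric] prod.distrib[symmetric] mult_ac)
qed

section \<open>Rising products with increment t\<close>

definition pochhammer_step :: "'a::comm_ring_1 \<Rightarrow> 'a \<Rightarrow> nat \<Rightarrow> 'a" where
  "pochhammer_step t z k = (\<Prod>i<k. z + of_nat i * t)"

lemma pochhammer_step_0 [simp]: "pochhammer_step t z 0 = 1"
  by (simp add: pochhammer_step_def)

lemma pochhammer_step_Suc: "pochhammer_step t z (Suc k) = pochhammer_step t z k * (z + of_nat k * t)"
  by (simp add: pochhammer_step_def)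

lemma pochhammer_step_Suc_left: "pochhammer_step t z (Suc k) = z * pochhammer_step t (z + t) k"
  unfolding pochhammer_step_def prod.lessThan_Suc_shift by (simp add: algebra_simps)

lemma pochhammer_step_add:
  fixes a b t :: "'a::comm_ring_1"
  shows "pochhammer_step t (a + b) n =
    (\<Sum>j\<le>n. of_nat (n choose j) * pochhammer_step t a j * pochhammer_step t b (n - j))"
proof (induction n)
  case (Suc n)
  let ?f = "pochhammer_step t a" and ?g = "pochhammer_step t b"
  have summand: "of_nat (n choose j) * (?f j * ?g (n - j) * (a + b + of_nat n * t)) =
      of_nat (n choose j) * ?f (Suc j) * ?g (n - j) + of_nat (n choose j) * ?f j * ?g (Suc n - j)"
    if "j \<le> n" for j
  proof -
    have "of_nat n * t = of_nat j * t + of_nat (n - j) * t"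
      using that by (simp add: of_nat_diff algebra_simps)
    then show ?thesis
      using that by (simp add: Suc_diff_le pochhammer_step_Suc algebra_simps)
  qed
  have "pochhammer_step t (a + b) (Suc n) =
      (\<Sum>j\<le>n. of_nat (n choose j) * (?f j * ?g (n - j) * (a + b + of_nat n * t)))"
    by (simp add: pochhammer_step_Suc Suc sum_distrib_right mult.assoc)
  also have "\<dots> = (\<Sum>j\<le>n. of_nat (n choose j) * ?f (Suc j) * ?g (n - j)) +
      (\<Sum>j\<le>n. of_nat (n choose j) * ?f j * ?g (Suc n - j))"
    unfolding sum.distrib[symmetric] by (rule sum.cong[OF refl]) (simp add: summand)
  also have "(\<Sum>j\<le>n. of_nat (n choose j) * ?f j * ?g (Suc n - j)) =
      (\<Sum>j\<le>Suc n. of_nat (n choose j) * ?f j * ?g (Suc n - j))"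
    by (simp add: binomial_eq_0)
  also have "\<dots> = ?g (Suc n) + (\<Sum>j\<le>n. of_nat (n choose Suc j) * ?f (Suc j) * ?g (n - j))"
    by (subst sum.atMost_Suc_shift) simp
  also have "(\<Sum>j\<le>n. of_nat (n choose j) * ?f (Suc j) * ?g (n - j)) + \<dots> =
      (\<Sum>j\<le>Suc n. of_nat (Suc n choose j) * ?f j * ?g (Suc n - j))"
    by (subst sum.atMost_Suc_shift) (simp add: sum.distrib algebra_simps)
  finally show ?case .
qed simp

lemma mult_pochhammer_step_add:
  fixes y z t :: "'a::comm_ring_1"
  shows "y * pochhammer_step t (y + (z + t)) n = z * (\<Sum>j<n. of_nat (n choose j) *
      pochhammer_step t y (Suc j) * pochhammer_step t (z + t) (n - Suc j)) + pochhammer_step t y (Suc n)"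
proof -
  have "pochhammer_step t z (n - j) = z * pochhammer_step t (z + t) (n - Suc j)" if "j < n" for j
    using that by (simp add: pochhammer_step_Suc_left flip: Suc_diff_Suc)
  then have "z * (\<Sum>j<n. of_nat (n choose j) *
        pochhammer_step t y (Suc j) * pochhammer_step t (z + t) (n - Suc j)) =
      (\<Sum>j<n. of_nat (n choose j) * pochhammer_step t y (Suc j) * pochhammer_step t z (n - j))"
    by (simp add: sum_distrib_left algebra_simps)
  also have "\<dots> + pochhammer_step t y (Suc n) =
      (\<Sum>j\<le>n. of_nat (n choose j) * pochhammer_step t y (Suc j) * pochhammer_step t z (n - j))"
    by (simp flip: lessThan_Suc_atMost)
  also have "\<dots> = y * pochhammer_step t ((y + t) + z) n"
    unfolding pochhammer_step_add[of t "y + t" z n] sum_distrib_left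
    by (simp add: pochhammer_step_Suc_left mult_ac)
  finally show ?thesis
    by (simp add: algebra_simps)
qed

section \<open>Orderings of brothers\<close>

lemma card_less_Suc_filter:
  "card {i. i < Suc n \<and> P i} = of_bool (P 0) + card {i. i < n \<and> P (Suc i)}"
  using card_less_Suc[of "Collect P" n] card_less_Suc2[of "Collect P" n]
  by (cases "P 0") (simp_all add: conj_commute)

lemma eld_children_Nil [simp]: "eld_children [] = 0"
  by (simp add: eld_children_def)

lemma eld_children_Cons:
  "eld_children (T # ts) = of_bool (\<exists>s\<in>set ts. beta s < beta T) + eld_children ts"
proof -
  let ?elder = "\<lambda>ts i. \<exists>k. i < k \<and> k < length ts \<and> beta (ts ! k) < beta (ts ! i)"
  have ex_Suc: "(\<exists>k. P k) \<longleftrightarrow> P 0 \<or> (\<exists>k. P (Suc k))" for P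
    by (metis not0_implies_Suc)
  have "?elder (T # ts) 0 \<longleftrightarrow> (\<exists>s\<in>set ts. beta s < beta T)"
    by (subst ex_Suc) (auto simp: in_set_conv_nth intro: nth_mem)
  moreover have "?elder (T # ts) (Suc i) \<longleftrightarrow> ?elder ts i" for i
    by (subst ex_Suc) auto
  ultimately show ?thesis
    unfolding eld_children_def length_Cons card_less_Suc_filter by presburger
qed

lemma eld_children_le_length: "eld_children ts \<le> length ts"
  unfolding eld_children_def by (rule card_mono[where B = "{..<length ts}", simplified]) auto

lemma sum_permutations_eld_children:
  fixes t z :: "'a::comm_ring_1"
  assumes "finite B" "inj_on beta B"
  shows "(\<Sum>ts\<in>permutations_of_set B. t ^ eld_children ts * z ^ (length ts - eld_children ts))
    = pochhammer_step t z (card B)"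
  using assms
proof (induction "card B" arbitrary: B)
  case (Suc k B)
  let ?w = "\<lambda>ts. t ^ eld_children ts * z ^ (length ts - eld_children ts)"
  have "B \<noteq> {}"
    using Suc.hyps(2) by auto
  obtain T0 where T0: "T0 \<in> B" "\<forall>T\<in>B. beta T0 \<le> beta T"
    using Suc.prems(1) \<open>B \<noteq> {}\<close> by (metis arg_min_if_finite not_le)
  have w_Cons: "?w (T # ts) = (if T = T0 then z else t) * ?w ts"
    if "T \<in> B" "ts \<in> permutations_of_set (B - {T})" for T ts
  proof -
    have "set ts = B - {T}"
      using that(2) by (simp add: permutations_of_set_def)
    then have "(\<exists>s\<in>set ts. beta s < beta T) \<longleftrightarrow> T \<noteq> T0"
      using that(1) T0 Suc.prems(2) by (auto simp: inj_on_def) (metis DiffI order_le_neq_trans singletonD)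
    then show ?thesis
      using eld_children_le_length[of ts] by (auto simp: eld_children_Cons Suc_diff_le)
  qed
  have IH: "sum ?w (permutations_of_set (B - {T})) = pochhammer_step t z k" if "T \<in> B" for T
    using that Suc.hyps Suc.prems by (simp add: inj_on_diff flip: Suc.hyps(2))
  have "sum ?w (permutations_of_set B) = (\<Sum>T\<in>B. sum ?w ((#) T ` permutations_of_set (B - {T})))"
    unfolding permutations_of_set_nonempty[OF \<open>B \<noteq> {}\<close>]
    by (rule sum.UNION_disjoint) (use Suc.prems(1) in auto)
  also have "\<dots> = (\<Sum>T\<in>B. \<Sum>ts\<in>permutations_of_set (B - {T}). (if T = T0 then z else t) * ?w ts)"
  proof (rule sum.cong[OF refl])
    fix T assume "T \<in> B"
    have "sum ?w ((#) T ` permutations_of_set (B - {T})) = (\<Sum>ts\<in>permutations_of_set (B - {T}). ?w (T # ts))"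
      by (simp add: sum.reindex)
    also have "\<dots> = (\<Sum>ts\<in>permutations_of_set (B - {T}). (if T = T0 then z else t) * ?w ts)"
      using \<open>T \<in> B\<close> by (intro sum.cong refl w_Cons)
    finally show "sum ?w ((#) T ` permutations_of_set (B - {T})) = \<dots>" .
  qed
  also have "\<dots> = (\<Sum>T\<in>B. (if T = T0 then z else t) * pochhammer_step t z k)"
    using IH by (simp add: sum_distrib_left[symmetric])
  also have "\<dots> = (z + of_nat k * t) * pochhammer_step t z k"
    using Suc.prems(1) T0(1) by (simp add: sum.remove sum_distrib_right[symmetric] flip: Suc.hyps(2))
  finally show ?case
    by (simp add: pochhammer_step_Suc mult.commute flip: Suc.hyps(2))
qed simp

section \<open>A convolution identity over subsets\<close>

lemma sum_Pow_card:
  fixes h :: "nat \<Rightarrow> 'a::comm_ring_1"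
  assumes "finite U"
  shows "(\<Sum>A\<in>Pow U. h (card A)) = (\<Sum>j\<le>card U. of_nat (card U choose j) * h j)"
proof -
  have "(\<Sum>A\<in>Pow U. h (card A)) = (\<Sum>j\<le>card U. \<Sum>A\<in>{A\<in>Pow U. card A = j}. h (card A))"
    by (rule sum.group[symmetric]) (use assms in \<open>auto intro: card_mono\<close>)
  also have "\<dots> = (\<Sum>j\<le>card U. of_nat (card U choose j) * h j)"
    using n_subsets[OF assms] by (intro sum.cong refl) (simp add: Pow_def conj_commute)
  finally show ?thesis .
qed

lemma sum_Pow_card_containing:
  fixes h :: "nat \<Rightarrow> 'a::comm_ring_1"
  assumes "finite U" "v \<in> U"
  shows "(\<Sum>A\<in>{A\<in>Pow U. v \<in> A}. h (card A)) =
    (\<Sum>j\<le>card U - 1. of_nat ((card U - 1) choose j) * h (Suc j))"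
proof -
  have "{A\<in>Pow U. v \<in> A} = insert v ` Pow (U - {v})"
  proof
    show "{A\<in>Pow U. v \<in> A} \<subseteq> insert v ` Pow (U - {v})"
    proof
      fix A assume "A \<in> {A\<in>Pow U. v \<in> A}"
      then have "A = insert v (A - {v})" "A - {v} \<in> Pow (U - {v})"
        by auto
      then show "A \<in> insert v ` Pow (U - {v})"
        by blast
    qed
  qed (use assms(2) in auto)
  moreover have "inj_on (insert v) (Pow (U - {v}))"
    unfolding inj_on_def by (auto simp: insert_ident)
  moreover have "card (insert v B) = Suc (card B)" if "B \<in> Pow (U - {v})" for B
    using that assms(1) by (metis DiffD2 PowD card_insert_disjoint finite_Diff finite_subset insertI1 subsetD)
  ultimately have "(\<Sum>A\<in>{A\<in>Pow U. v \<in> A}. h (card A)) = (\<Sum>B\<in>Pow (U - {v}). h (Suc (card B)))"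
    by (simp add: sum.reindex)
  then show ?thesis
    using sum_Pow_card[of "U - {v}" "\<lambda>j. h (Suc j)"] assms by simp
qed

lemma sum_Pow_card_mult_sum:
  fixes h :: "nat \<Rightarrow> 'a::comm_ring_1" and x :: "'b \<Rightarrow> 'a"
  assumes "finite U"
  shows "(\<Sum>A\<in>Pow U. h (card A) * sum x A) =
    sum x U * (\<Sum>j\<le>card U - 1. of_nat ((card U - 1) choose j) * h (Suc j))"
proof -
  have "(\<Sum>A\<in>Pow U. h (card A) * sum x A) = (\<Sum>A\<in>Pow U. \<Sum>v\<in>{v\<in>U. v \<in> A}. h (card A) * x v)"
    by (rule sum.cong[OF refl]) (auto simp: sum_distrib_left intro!: sum.cong)
  also have "\<dots> = (\<Sum>v\<in>U. \<Sum>A\<in>{A\<in>Pow U. v \<in> A}. h (card A) * x v)"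
    by (rule sum.swap_restrict) (use assms in auto)
  also have "\<dots> = (\<Sum>v\<in>U. x v * (\<Sum>j\<le>card U - 1. of_nat ((card U - 1) choose j) * h (Suc j)))"
  proof (rule sum.cong[OF refl])
    fix v assume "v \<in> U"
    have "(\<Sum>A\<in>{A\<in>Pow U. v \<in> A}. h (card A) * x v) = x v * (\<Sum>A\<in>{A\<in>Pow U. v \<in> A}. h (card A))"
      by (simp add: sum_distrib_left mult.commute)
    also have "\<dots> = x v * (\<Sum>j\<le>card U - 1. of_nat ((card U - 1) choose j) * h (Suc j))"
      using assms \<open>v \<in> U\<close> by (simp only: sum_Pow_card_containing)
    finally show "(\<Sum>A\<in>{A\<in>Pow U. v \<in> A}. h (card A) * x v) = \<dots>" .
  qed
  finally show ?thesis
    by (simp add: sum_distrib_right)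
qed

lemma sum_atMost_Suc_choose:
  fixes w :: "nat \<Rightarrow> 'a::comm_ring_1"
  shows "(\<Sum>j\<le>n. of_nat (Suc n choose j) * w j) =
    (\<Sum>j\<le>n. of_nat (n choose j) * w j) + (\<Sum>j<n. of_nat (n choose j) * w (Suc j))"
proof -
  have "(\<Sum>j\<le>n. of_nat (Suc n choose j) * w j) = w 0 + (\<Sum>j<n. of_nat (Suc n choose Suc j) * w (Suc j))"
    by (simp add: atMost_atLeast0 sum.atLeast_Suc_atMost sum.atLeast1_atMost_eq)
  also have "\<dots> = (w 0 + (\<Sum>j<n. of_nat (n choose Suc j) * w (Suc j))) +
      (\<Sum>j<n. of_nat (n choose j) * w (Suc j))"
    by (simp add: sum.distrib algebra_simps)
  also have "w 0 + (\<Sum>j<n. of_nat (n choose Suc j) * w (Suc j)) = (\<Sum>j\<le>n. of_nat (n choose j) * w j)"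
    by (simp add: atMost_atLeast0 sum.atLeast_Suc_atMost sum.atLeast1_atMost_eq)
  finally show ?thesis .
qed

definition forest_polynomial :: "'a::comm_ring_1 \<Rightarrow> 'a \<Rightarrow> 'a \<Rightarrow> nat \<Rightarrow> 'a" where
  "forest_polynomial t w z m = (if m = 0 then 1 else w * pochhammer_step t (z + t) (m - 1))"

lemma sum_Pow_forest_polynomial:
  fixes c y t :: "'a::comm_ring_1" and x :: "'b \<Rightarrow> 'a"
  assumes "finite U"
  shows "(\<Sum>A\<in>Pow U. pochhammer_step t y (card A) *
            forest_polynomial t (c + sum x A) (c + sum x U) (card U - card A))
       = forest_polynomial t (c + y) (c + sum x U + y) (card U)"
proof (cases "U = {}")
  case False
  then obtain n where n: "card U = Suc n"
    using assms by (metis card_0_eq not0_implies_Suc)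
  define Z where "Z = c + sum x U"
  define w where "w j = pochhammer_step t y j * pochhammer_step t (Z + t) (n - j)" for j
  define F where "F j = (if j = Suc n then pochhammer_step t y j else c * w j)" for j
  define G where "G j = (if j = Suc n then 0 else w j)" for j
  have "pochhammer_step t y (card A) * forest_polynomial t (c + sum x A) Z (card U - card A)
      = F (card A) + G (card A) * sum x A" if "A \<in> Pow U" for A
    using card_mono[OF assms, of A] that
    by (auto simp: n forest_polynomial_def F_def G_def w_def algebra_simps)
  then have "(\<Sum>A\<in>Pow U. pochhammer_step t y (card A) * forest_polynomial t (c + sum x A) Z (card U - card A))
      = (\<Sum>j\<le>Suc n. of_nat (Suc n choose j) * F j) + sum x U * (\<Sum>j\<le>n. of_nat (n choose j) * G (Suc j))"
    using sum_Pow_card[OF assms, of F] sum_Pow_card_mult_sum[OF assms, of G x]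
    by (simp add: n sum.distrib)
  also have "\<dots> = c * (\<Sum>j\<le>n. of_nat (n choose j) * w j) +
      (Z * (\<Sum>j<n. of_nat (n choose j) * w (Suc j)) + pochhammer_step t y (Suc n))"
  proof -
    have "(\<Sum>j\<le>Suc n. of_nat (Suc n choose j) * F j) =
        c * (\<Sum>j\<le>n. of_nat (Suc n choose j) * w j) + pochhammer_step t y (Suc n)"
      by (simp add: F_def sum_distrib_left algebra_simps)
    also have "(\<Sum>j\<le>n. of_nat (Suc n choose j) * w j) =
        (\<Sum>j\<le>n. of_nat (n choose j) * w j) + (\<Sum>j<n. of_nat (n choose j) * w (Suc j))"
      by (rule sum_atMost_Suc_choose)
    moreover have "(\<Sum>j\<le>n. of_nat (n choose j) * G (Suc j)) = (\<Sum>j<n. of_nat (n choose j) * w (Suc j))"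
      by (simp add: G_def flip: lessThan_Suc_atMost)
    ultimately show ?thesis
      by (simp add: Z_def algebra_simps)
  qed
  also have "(\<Sum>j\<le>n. of_nat (n choose j) * w j) = pochhammer_step t (y + (Z + t)) n"
    by (simp add: pochhammer_step_add[of t y "Z + t" n] w_def mult.assoc)
  also have "Z * (\<Sum>j<n. of_nat (n choose j) * w (Suc j)) + pochhammer_step t y (Suc n)
      = y * pochhammer_step t (y + (Z + t)) n"
    by (simp add: mult_pochhammer_step_add w_def mult.assoc)
  finally show ?thesis
    by (simp add: n Z_def forest_polynomial_def algebra_simps)
qed (simp add: forest_polynomial_def)

section \<open>Plane forests\<close>

definition plane_forests :: "nat set \<Rightarrow> nat set \<Rightarrow> ptree set set" where
  "plane_forests S R = {F. (\<forall>T\<in>F. distinct (labels T)) \<and> disjoint_family_on vertices F \<and>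
     root ` F = R \<and> (\<Union>T\<in>F. vertices T) = S}"

lemma inj_on_if_disjoint_vertices:
  assumes "disjoint_family_on vertices F" "\<And>T. f T \<in> vertices T"
  shows "inj_on f F"
proof (rule inj_onI)
  fix T T' assume "T \<in> F" "T' \<in> F" "f T = f T'"
  then have "vertices T \<inter> vertices T' \<noteq> {}"
    using assms(2)[of T] assms(2)[of T'] by auto
  then show "T = T'"
    using assms(1) \<open>T \<in> F\<close> \<open>T' \<in> F\<close> by (auto simp: disjoint_family_on_def)
qed

lemma finite_plane_forest:
  assumes "F \<in> plane_forests S R" "finite S"
  shows "finite F"
proof (rule finite_imageD)
  show "inj_on root F"
    using assms(1) root_in_vertices by (auto simp: plane_forests_def intro: inj_on_if_disjoint_vertices)
  have "root ` F \<subseteq> S"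
    using assms(1) root_in_vertices by (auto simp: plane_forests_def)
  then show "finite (root ` F)"
    using assms(2) by (rule finite_subset)
qed

definition graft :: "nat \<Rightarrow> ptree list \<Rightarrow> ptree set \<Rightarrow> ptree set" where
  "graft a ts F = insert (PNode a ts) (F - set ts)"

text \<open>
  A forest with root set R is rebuilt from the set A of roots of the children of a, the forest F
  left after deleting a, and the order ts of those children.
\<close>

definition graft_data ::
    "nat \<Rightarrow> nat set \<Rightarrow> nat set \<Rightarrow> (nat set \<times> ptree set \<times> ptree list) set" where
  "graft_data a S R = (SIGMA A:Pow (S - R). SIGMA F:plane_forests (S - {a}) (R - {a} \<union> A).
     permutations_of_set {T\<in>F. root T \<in> A})"

lemma graft_in_plane_forests:
  assumes "a \<in> R" "R \<subseteq> S" "(A, F, ts) \<in> graft_data a S R"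
  shows "graft a ts F \<in> plane_forests S R"
proof -
  have A: "A \<subseteq> S - R" and ts: "set ts = {T\<in>F. root T \<in> A}" "distinct ts"
    using assms(3) by (auto simp: graft_data_def permutations_of_set_def)
  have F: "\<forall>T\<in>F. distinct (labels T)" "disjoint_family_on vertices F"
    "root ` F = R - {a} \<union> A" "(\<Union>T\<in>F. vertices T) = S - {a}"
    using assms(3) by (auto simp: graft_data_def plane_forests_def)
  have "set ts \<subseteq> F"
    using ts(1) by auto
  have a_notin: "\<forall>T\<in>F. a \<notin> vertices T"
    using F(4) by blast
  have "a \<notin> root ` F"
    using F(3) A assms(1) by auto
  then have "PNode a ts \<notin> F"
    by force
  have "root ` (F - set ts) = root ` F - A"
    using ts(1) by auto
  then have roots: "root ` (F - set ts) = R - {a}"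
    using F(3) A by auto
  have distinct: "distinct (labels (PNode a ts))"
    unfolding distinct_labels_PNode using ts(2) F a_notin \<open>set ts \<subseteq> F\<close>
    by (auto intro: disjoint_family_on_mono)
  have disjoint: "disjoint_family_on vertices (insert (PNode a ts) (F - set ts))"
  proof -
    have "vertices s \<inter> vertices T = {}" if "s \<in> set ts" "T \<in> F - set ts" for s T
      using F(2) that \<open>set ts \<subseteq> F\<close> by (auto dest: disjoint_family_onD)
    then show ?thesis
      using \<open>PNode a ts \<notin> F\<close> a_notin F(2)
      by (auto simp: disjoint_family_on_insert intro: disjoint_family_on_mono)
  qed
  have "(\<Union>T\<in>insert (PNode a ts) (F - set ts). vertices T) = insert a (\<Union>T\<in>F. vertices T)"
    using \<open>set ts \<subseteq> F\<close> by auto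
  then have vertices: "(\<Union>T\<in>insert (PNode a ts) (F - set ts). vertices T) = S"
    using F(4) assms(1,2) by auto
  show ?thesis
    unfolding graft_def plane_forests_def using F(1) distinct disjoint roots vertices assms(1) by auto
qed

lemma graft_data_root_notin:
  assumes "a \<in> R" "(A, F, ts) \<in> graft_data a S R"
  shows "a \<notin> root ` F"
  using assms by (auto simp: graft_data_def plane_forests_def)

lemma graft_data_decompose:
  assumes "a \<in> R" "(A, F, ts) \<in> graft_data a S R"
  shows "{T\<in>graft a ts F. root T = a} = {PNode a ts}"
    and "F = (graft a ts F - {PNode a ts}) \<union> set ts"
    and "A = root ` set ts"
proof -
  have ts: "set ts = {T\<in>F. root T \<in> A}" and roots: "root ` F = R - {a} \<union> A"
    using assms(2) by (auto simp: graft_data_def permutations_of_set_def plane_forests_def)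
  have "a \<notin> root ` F"
    using graft_data_root_notin[OF assms] .
  then show "{T\<in>graft a ts F. root T = a} = {PNode a ts}"
    by (auto simp: graft_def)
  show "F = (graft a ts F - {PNode a ts}) \<union> set ts"
    using \<open>a \<notin> root ` F\<close> ts by (force simp: graft_def)
  show "A = root ` set ts"
    using roots ts by auto
qed

lemma inj_on_graft:
  assumes "a \<in> R"
  shows "inj_on (\<lambda>(A, F, ts). graft a ts F) (graft_data a S R)"
proof (rule inj_onI)
  fix x y
  assume "x \<in> graft_data a S R" "y \<in> graft_data a S R"
    and "(\<lambda>(A, F, ts). graft a ts F) x = (\<lambda>(A, F, ts). graft a ts F) y"
  moreover obtain A F ts A' F' ts' where xy: "x = (A, F, ts)" "y = (A', F', ts')"
    by (cases x, cases y) auto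
  ultimately have data: "(A, F, ts) \<in> graft_data a S R" "(A', F', ts') \<in> graft_data a S R"
    and eq: "graft a ts F = graft a ts' F'"
    by simp_all
  have "{PNode a ts} = {PNode a ts'}"
    using graft_data_decompose(1)[OF assms data(1)] graft_data_decompose(1)[OF assms data(2)] eq
    by simp
  then have "ts = ts'"
    by simp
  then show "x = y"
    using graft_data_decompose(2,3)[OF assms data(1)] graft_data_decompose(2,3)[OF assms data(2)] eq xy
    by simp
qed

lemma roots_of_children_subset:
  assumes "G \<in> plane_forests S R" "PNode a ts \<in> G"
  shows "root ` set ts \<subseteq> S - R"
proof -
  have G: "disjoint_family_on vertices G" "root ` G = R" "(\<Union>T\<in>G. vertices T) = S"
    and "distinct (labels (PNode a ts))"
    using assms by (auto simp: plane_forests_def)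
  then have a_notin: "a \<notin> (\<Union>s\<in>set ts. vertices s)"
    unfolding distinct_labels_PNode by blast
  have "vertices (PNode a ts) \<subseteq> S"
    using G(3) assms(2) by blast
  have "root s \<notin> R" if "s \<in> set ts" for s
  proof
    assume "root s \<in> R"
    then obtain T where T: "T \<in> G" "root T = root s"
      using G(2) by (metis imageE)
    show False
    proof (cases "T = PNode a ts")
      case True
      then show False
        using a_notin that T(2) root_in_vertices[of s] by auto
    next
      case False
      then have "vertices (PNode a ts) \<inter> vertices T = {}"
        using disjoint_family_onD[OF G(1) assms(2) T(1)] by blast
      then show False
        using that T(2) root_in_vertices[of s] root_in_vertices[of T] by auto
    qed
  qed
  moreover have "root s \<in> S" if "s \<in> set ts" for s
    using that \<open>vertices (PNode a ts) \<subseteq> S\<close> root_in_vertices[of s] by auto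
  ultimately show ?thesis
    by auto
qed

lemma ungraft_in_plane_forests:
  assumes "G \<in> plane_forests S R" "PNode a ts \<in> G"
  shows "(G - {PNode a ts}) \<union> set ts \<in> plane_forests (S - {a}) (R - {a} \<union> root ` set ts)"
proof -
  let ?P = "PNode a ts"
  have G: "\<forall>T\<in>G. distinct (labels T)" "disjoint_family_on vertices G"
    "root ` G = R" "(\<Union>T\<in>G. vertices T) = S"
    using assms(1) by (auto simp: plane_forests_def)
  have "distinct (labels ?P)"
    using G(1) assms(2) by blast
  then have ts: "a \<notin> (\<Union>s\<in>set ts. vertices s)" "\<forall>s\<in>set ts. distinct (labels s)"
    "disjoint_family_on vertices (set ts)"
    unfolding distinct_labels_PNode by auto
  have apart: "vertices s \<inter> vertices T = {}" if "s \<in> set ts" "T \<in> G - {?P}" for s T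
    using disjoint_family_onD[OF G(2) assms(2), of T] that by auto
  have a_apart: "a \<notin> vertices T" if "T \<in> G - {?P}" for T
    using disjoint_family_onD[OF G(2) assms(2), of T] that by auto
  have "S = vertices ?P \<union> (\<Union>T\<in>G - {?P}. vertices T)"
    using G(4) assms(2) by blast
  have "disjoint_family_on vertices ((G - {?P}) \<union> set ts)"
    unfolding disjoint_family_on_def
  proof (intro ballI impI)
    fix m n assume "m \<in> (G - {?P}) \<union> set ts" "n \<in> (G - {?P}) \<union> set ts" "m \<noteq> n"
    then show "vertices m \<inter> vertices n = {}"
      using apart[of m n] apart[of n m] disjoint_family_onD[OF G(2), of m n]
        disjoint_family_onD[OF ts(3), of m n]
      by (auto simp: Int_commute)
  qed
  moreover have "(\<Union>T\<in>(G - {?P}) \<union> set ts. vertices T) = S - {a}"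
    using \<open>S = vertices ?P \<union> (\<Union>T\<in>G - {?P}. vertices T)\<close> ts(1) a_apart by auto
  moreover have "root ` (G - {?P}) = R - {a}"
    using inj_on_if_disjoint_vertices[OF G(2) root_in_vertices] G(3) assms(2)
    by (simp add: inj_on_image_set_diff)
  ultimately show ?thesis
    using G(1) ts(2) by (auto simp: plane_forests_def image_Un)
qed

lemma plane_forests_subset_graft_image:
  assumes "a \<in> R"
  shows "plane_forests S R \<subseteq> (\<lambda>(A, F, ts). graft a ts F) ` graft_data a S R"
proof
  fix G assume G: "G \<in> plane_forests S R"
  obtain T where "T \<in> G" "root T = a"
    using assms G by (auto simp: plane_forests_def)
  then obtain ts where P: "PNode a ts \<in> G"
    by (cases T) auto
  define F where "F = (G - {PNode a ts}) \<union> set ts"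
  define A where "A = root ` set ts"
  have A: "A \<subseteq> S - R"
    using roots_of_children_subset[OF G P] by (simp add: A_def)
  have roots: "root ` G = R" and "distinct (labels (PNode a ts))"
    using G P by (auto simp: plane_forests_def)
  then have "distinct ts"
    by (simp add: distinct_labels_PNode del: labels.simps)
  have "set ts \<inter> G = {}"
    using A roots by (auto simp: A_def)
  then have "{T\<in>F. root T \<in> A} = set ts" "G = graft a ts F"
    using A roots P by (auto simp: F_def A_def graft_def)
  moreover have "F \<in> plane_forests (S - {a}) (R - {a} \<union> A)"
    unfolding F_def A_def by (rule ungraft_in_plane_forests[OF G P])
  ultimately show "G \<in> (\<lambda>(A, F, ts). graft a ts F) ` graft_data a S R"
    using A \<open>distinct ts\<close> by (auto simp: graft_data_def intro!: rev_image_eqI[of "(A, F, ts)"])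
qed

lemma bij_betw_graft:
  assumes "a \<in> R" "R \<subseteq> S"
  shows "bij_betw (\<lambda>(A, F, ts). graft a ts F) (graft_data a S R) (plane_forests S R)"
  unfolding bij_betw_def
  using inj_on_graft[OF assms(1)] graft_in_plane_forests[OF assms] plane_forests_subset_graft_image[OF assms(1)]
  by fast

lemma plane_forests_roots_subset: "F \<in> plane_forests S R \<Longrightarrow> R \<subseteq> S"
  using root_in_vertices by (auto simp: plane_forests_def)

lemma plane_forests_no_roots: "plane_forests S {} = (if S = {} then {{}} else {})"
  by (auto simp: plane_forests_def disjoint_family_on_def)

lemma finite_plane_forests: "finite S \<Longrightarrow> finite (plane_forests S R)"
proof (induction "card S" arbitrary: S R rule: less_induct)
  case less
  consider "R = {}" | "\<not> R \<subseteq> S" | a where "a \<in> R" "R \<subseteq> S"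
    by blast
  then show ?case
  proof cases
    case 1
    then show ?thesis
      by (simp add: plane_forests_no_roots)
  next
    case 2
    then have "plane_forests S R = {}"
      using plane_forests_roots_subset by blast
    then show ?thesis
      by simp
  next
    case 3
    have "finite (plane_forests (S - {a}) (R - {a} \<union> A))" for A
      using less.prems 3 by (intro less.hyps) (auto intro!: card_Diff1_less)
    then have "finite (graft_data a S R)"
      using less.prems by (auto simp: graft_data_def intro!: finite_SigmaI)
    then show ?thesis
      using bij_betw_finite[OF bij_betw_graft[OF 3]] by simp
  qed
qed

definition plane_forests_weight ::
    "'a::comm_ring_1 \<Rightarrow> (nat \<Rightarrow> 'a) \<Rightarrow> nat set \<Rightarrow> nat set \<Rightarrow> 'a" where
  "plane_forests_weight t x S R = (\<Sum>F\<in>plane_forests S R. \<Prod>T\<in>F. tree_weight t x T)"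

lemma prod_tree_weight_graft:
  assumes "a \<in> R" "finite S" "(A, F, ts) \<in> graft_data a S R"
  shows "(\<Prod>T\<in>graft a ts F. tree_weight t x T) =
    t ^ eld_children ts * x a ^ (length ts - eld_children ts) * (\<Prod>T\<in>F. tree_weight t x T)"
proof -
  let ?w = "tree_weight t x"
  have F: "F \<in> plane_forests (S - {a}) (R - {a} \<union> A)" and ts: "set ts \<subseteq> F" "distinct ts"
    using assms(3) by (auto simp: graft_data_def permutations_of_set_def)
  have "finite F"
    using finite_plane_forest[OF F] assms(2) by simp
  have "PNode a ts \<notin> F - set ts"
    using graft_data_root_notin[OF assms(1,3)] by force
  then have "(\<Prod>T\<in>graft a ts F. ?w T) = ?w (PNode a ts) * (\<Prod>T\<in>F - set ts. ?w T)"
    using \<open>finite F\<close> by (simp add: graft_def)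
  also have "?w (PNode a ts) =
      t ^ eld_children ts * x a ^ (length ts - eld_children ts) * (\<Prod>T\<in>set ts. ?w T)"
    using ts(2) by (simp add: prod.distinct_set_conv_list)
  also have "\<dots> * (\<Prod>T\<in>F - set ts. ?w T) =
      t ^ eld_children ts * x a ^ (length ts - eld_children ts) * (\<Prod>T\<in>F. ?w T)"
    using prod.subset_diff[OF ts(1) \<open>finite F\<close>, of ?w] by (simp add: mult_ac)
  finally show ?thesis .
qed

lemma sum_permutations_graft:
  fixes t :: "'a::comm_ring_1"
  assumes "a \<in> R" "finite S" "A \<subseteq> S - R" "F \<in> plane_forests (S - {a}) (R - {a} \<union> A)"
  shows "(\<Sum>ts\<in>permutations_of_set {T\<in>F. root T \<in> A}. \<Prod>T\<in>graft a ts F. tree_weight t x T) =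
    pochhammer_step t (x a) (card A) * (\<Prod>T\<in>F. tree_weight t x T)"
proof -
  let ?W = "\<lambda>F. \<Prod>T\<in>F. tree_weight t x T"
  define C where "C = {T\<in>F. root T \<in> A}"
  have "finite C"
    using finite_plane_forest[OF assms(4)] assms(2) by (simp add: C_def)
  have disjoint: "disjoint_family_on vertices C" and roots: "root ` F = R - {a} \<union> A"
    using assms(4) by (auto simp: plane_forests_def C_def intro: disjoint_family_on_mono)
  have "(\<Sum>ts\<in>permutations_of_set C. ?W (graft a ts F)) =
      (\<Sum>ts\<in>permutations_of_set C. t ^ eld_children ts * x a ^ (length ts - eld_children ts) * ?W F)"
    by (rule sum.cong[OF refl], rule prod_tree_weight_graft[OF assms(1,2)])
      (use assms(3,4) in \<open>simp add: graft_data_def C_def\<close>)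
  also have "\<dots> = (\<Sum>ts\<in>permutations_of_set C.
      t ^ eld_children ts * x a ^ (length ts - eld_children ts)) * ?W F"
    by (simp add: sum_distrib_right)
  also have "\<dots> = pochhammer_step t (x a) (card C) * ?W F"
    using \<open>finite C\<close> inj_on_if_disjoint_vertices[OF disjoint beta_in_vertices]
    by (simp add: sum_permutations_eld_children)
  also have "card C = card A"
  proof -
    have "root ` C = A"
      using roots by (auto simp: C_def)
    then show ?thesis
      using card_image[OF inj_on_if_disjoint_vertices[OF disjoint root_in_vertices]] by simp
  qed
  finally show ?thesis
    by (simp add: C_def)
qed

lemma plane_forests_weight_rec:
  fixes t :: "'a::comm_ring_1"
  assumes "finite S" "R \<subseteq> S" "a \<in> R"
  shows "plane_forests_weight t x S R = (\<Sum>A\<in>Pow (S - R).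
    pochhammer_step t (x a) (card A) * plane_forests_weight t x (S - {a}) (R - {a} \<union> A))"
proof -
  let ?W = "\<lambda>F. \<Prod>T\<in>F. tree_weight t x T"
  have "finite (plane_forests (S - {a}) (R - {a} \<union> A))" for A
    using assms(1) by (simp add: finite_plane_forests)
  then have "plane_forests_weight t x S R =
      (\<Sum>A\<in>Pow (S - R). \<Sum>F\<in>plane_forests (S - {a}) (R - {a} \<union> A).
      \<Sum>ts\<in>permutations_of_set {T\<in>F. root T \<in> A}. ?W (graft a ts F))"
    unfolding plane_forests_weight_def sum.reindex_bij_betw[OF bij_betw_graft[OF assms(3,2)], symmetric]
    using assms(1) by (simp add: graft_data_def sum.Sigma split_def)
  also have "\<dots> = (\<Sum>A\<in>Pow (S - R). \<Sum>F\<in>plane_forests (S - {a}) (R - {a} \<union> A).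
      pochhammer_step t (x a) (card A) * ?W F)"
    using sum_permutations_graft[OF assms(3,1)] by (intro sum.cong refl) simp
  finally show ?thesis
    by (simp add: plane_forests_weight_def sum_distrib_left)
qed

lemma sum_Pow_forest_polynomial_remove_root:
  fixes t :: "'a::comm_ring_1"
  assumes "finite S" "R \<subseteq> S" "a \<in> R"
  shows "(\<Sum>A\<in>Pow (S - R). pochhammer_step t (x a) (card A) * forest_polynomial t
      (sum x (R - {a} \<union> A)) (sum x (S - {a})) (card ((S - {a}) - (R - {a} \<union> A))))
    = forest_polynomial t (sum x R) (sum x S) (card (S - R))"
proof -
  define U where "U = S - R"
  define c where "c = sum x (R - {a})"
  have "finite R" "finite U"
    using assms finite_subset by (auto simp: U_def)
  have sum_union: "sum x (R - {a} \<union> A) = c + sum x A" if "A \<subseteq> U" for A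
    unfolding c_def by (rule sum.union_disjoint)
      (use that \<open>finite R\<close> finite_subset[OF that \<open>finite U\<close>] in \<open>auto simp: U_def\<close>)
  have "S - {a} = R - {a} \<union> U"
    using assms(2,3) by (auto simp: U_def)
  then have "sum x (S - {a}) = c + sum x U"
    using sum_union[OF order_refl] by simp
  moreover note sum_union
  moreover have "card ((S - {a}) - (R - {a} \<union> A)) = card U - card A" if "A \<subseteq> U" for A
  proof -
    have "(S - {a}) - (R - {a} \<union> A) = U - A"
      using assms(3) by (auto simp: U_def)
    then show ?thesis
      using that finite_subset[OF that \<open>finite U\<close>] by (simp add: card_Diff_subset)
  qed
  ultimately have "(\<Sum>A\<in>Pow U. pochhammer_step t (x a) (card A) * forest_polynomial t
      (sum x (R - {a} \<union> A)) (sum x (S - {a})) (card ((S - {a}) - (R - {a} \<union> A))))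
    = (\<Sum>A\<in>Pow U. pochhammer_step t (x a) (card A) *
        forest_polynomial t (c + sum x A) (c + sum x U) (card U - card A))"
    by (intro sum.cong refl) auto
  also have "\<dots> = forest_polynomial t (c + x a) (c + sum x U + x a) (card U)"
    using \<open>finite U\<close> by (rule sum_Pow_forest_polynomial)
  also have "c + x a = sum x R"
    using \<open>finite R\<close> assms(3) by (simp add: c_def sum.remove)
  also have "c + sum x U + x a = sum x S"
    using sum.subset_diff[OF assms(2,1), of x] \<open>c + x a = sum x R\<close> by (simp add: U_def algebra_simps)
  finally show ?thesis
    by (simp add: U_def)
qed

lemma plane_forests_weight_eq_forest_polynomial:
  fixes t :: "'a::comm_ring_1"
  assumes "finite S" "R \<subseteq> S"
  shows "plane_forests_weight t x S R = forest_polynomial t (sum x R) (sum x S) (card (S - R))"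
  using assms
proof (induction "card S" arbitrary: S R rule: less_induct)
  case less
  show ?case
  proof (cases "R = {}")
    case True
    then show ?thesis
      using less.prems by (simp add: plane_forests_weight_def plane_forests_no_roots forest_polynomial_def)
  next
    case False
    then obtain a where a: "a \<in> R"
      by blast
    then have smaller: "card (S - {a}) < card S"
      using less.prems by (meson card_Diff1_less subsetD)
    have "plane_forests_weight t x S R = (\<Sum>A\<in>Pow (S - R).
        pochhammer_step t (x a) (card A) * plane_forests_weight t x (S - {a}) (R - {a} \<union> A))"
      by (rule plane_forests_weight_rec[OF less.prems a])
    also have "\<dots> = (\<Sum>A\<in>Pow (S - R). pochhammer_step t (x a) (card A) * forest_polynomial t
        (sum x (R - {a} \<union> A)) (sum x (S - {a})) (card ((S - {a}) - (R - {a} \<union> A))))"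
      using less.prems a by (intro sum.cong refl arg_cong2[where f = "(*)"] less.hyps[OF smaller]) auto
    also have "\<dots> = forest_polynomial t (sum x R) (sum x S) (card (S - R))"
      by (rule sum_Pow_forest_polynomial_remove_root[OF less.prems a])
    finally show ?thesis .
  qed
qed

lemma plane_forests_single_root:
  "plane_forests S {r} = (\<lambda>T. {T}) ` {T. distinct (labels T) \<and> vertices T = S \<and> root T = r}"
proof
  show "plane_forests S {r} \<subseteq> (\<lambda>T. {T}) ` {T. distinct (labels T) \<and> vertices T = S \<and> root T = r}"
  proof
    fix F assume F: "F \<in> plane_forests S {r}"
    then have "inj_on root F" "root ` F = {r}"
      using inj_on_if_disjoint_vertices root_in_vertices by (auto simp: plane_forests_def)
    obtain T where "T \<in> F"
      using \<open>root ` F = {r}\<close> by blast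
    have "T' = T" if "T' \<in> F" for T'
    proof -
      have "root T' = root T"
        using that \<open>T \<in> F\<close> \<open>root ` F = {r}\<close> by (metis imageI singletonD)
      then show ?thesis
        using inj_onD[OF \<open>inj_on root F\<close>] that \<open>T \<in> F\<close> by blast
    qed
    then have "F = {T}"
      using \<open>T \<in> F\<close> by blast
    then show "F \<in> (\<lambda>T. {T}) ` {T. distinct (labels T) \<and> vertices T = S \<and> root T = r}"
      using F by (auto simp: plane_forests_def)
  qed
qed (auto simp: plane_forests_def disjoint_family_on_def)

theorem theorem4p6:
  fixes n r :: nat and t :: "'a::comm_ring_1" and x :: "nat \<Rightarrow> 'a"
  assumes "n \<ge> 2" and "r \<in> {1..n}"
  shows "(\<Sum>T\<in>plane_trees n r. t ^ eld T * (\<Prod>i=1..n. x i ^ young T i))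
         = x r * (\<Prod>k=1..n-2. (\<Sum>i=1..n. x i) + of_nat k * t)"
proof -
  have "(\<Sum>T\<in>plane_trees n r. t ^ eld T * (\<Prod>i=1..n. x i ^ young T i)) =
      (\<Sum>T\<in>plane_trees n r. tree_weight t x T)"
    by (intro sum.cong refl monomial_eq_tree_weight) (auto simp: plane_trees_def)
  also have "\<dots> = plane_forests_weight t x {1..n} {r}"
    by (simp add: plane_forests_weight_def plane_forests_single_root plane_trees_def sum.reindex)
  also have "\<dots> = forest_polynomial t (x r) (\<Sum>i=1..n. x i) (n - 1)"
    using assms by (simp add: plane_forests_weight_eq_forest_polynomial)
  also have "\<dots> = x r * (\<Prod>k=1..n-2. (\<Sum>i=1..n. x i) + of_nat k * t)"
    using assms by (simp add: forest_polynomial_def pochhammer_step_def prod.atLeast1_atMost_eq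
        numeral_2_eq_2 algebra_simps)
  finally show ?thesis .
qed

end
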